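(* Let $v\ge 0$. The optimal value of $$\min_{y\in\mathbb{R}^{n^-}}\ -\sum_{i=1}^{n^-}\left(\frac{y_i}{\lambda}\right)^{1/\beta}\quad\text{s.t.}\quad y_1\ge\cdots\ge y_{n^-}\ge 0,\qquad \sum_{i=1}^{n^-}h^-_iy_i=v$$ equals $$-\left(\frac{v}{\lambda}\right)^{1/\beta}\cdot\max_{L\in\{1,\dots,n^-\}} L\cdot\Big(\sum_{i=1}^{L}h^-_i\Big)^{-1/\beta}.$$
   Context: Fix $N\in\mathbb{N}$, $\beta\in(0,1)$, $\lambda>0$, and an integer $1\le n^-\le N$. A function $f:[0,1]\to\mathbb{R}$ is inverse S-shaped if it is strictly increasing, continuously differentiable, and there is $x_0\in[0,1]$ such that $f'$ is strictly decreasing on $[0,x_0]$ and strictly increasing on $[x_0,1]$. Let $W^-:[0,1]\to[0,1]$ be inverse S-shaped with $W^-(0)=0$, $W^-(1)=1$, and $h^-_i:=W^-\!\left(\frac{i}{N}\right)-W^-\!\left(\frac{i-1}{N}\right)$ for $i=1,\dots,n^-$. *)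

theory Defs
  imports "HOL-Analysis.Analysis"
begin

definition inverse_S_shaped :: "(real \<Rightarrow> real) \<Rightarrow> bool" where
  "inverse_S_shaped f \<longleftrightarrow>
     strict_mono_on {0..1} f \<and>
     (\<exists>f'. (\<forall>x\<in>{0..1}. (f has_real_derivative f' x) (at x within {0..1})) \<and>
           continuous_on {0..1} f' \<and>
           (\<exists>x0\<in>{0..1}.
              (\<forall>x\<in>{0..x0}. \<forall>y\<in>{0..x0}. x < y \<longrightarrow> f' y < f' x) \<and>
              (\<forall>x\<in>{x0..1}. \<forall>y\<in>{x0..1}. x < y \<longrightarrow> f' x < f' y)))"

definition hminus :: "(real \<Rightarrow> real) \<Rightarrow> nat \<Rightarrow> nat \<Rightarrow> real" where
  "hminus W N i = W (real i / real N) - W (real (i - 1) / real N)"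

definition feasible :: "(nat \<Rightarrow> real) \<Rightarrow> nat \<Rightarrow> real \<Rightarrow> (nat \<Rightarrow> real) \<Rightarrow> bool" where
  "feasible h n v y \<longleftrightarrow>
     (\<forall>i\<in>{1..<n}. y (Suc i) \<le> y i) \<and> 0 \<le> y n \<and>
     (\<Sum>i=1..n. h i * y i) = v"

definition objective :: "real \<Rightarrow> real \<Rightarrow> nat \<Rightarrow> (nat \<Rightarrow> real) \<Rightarrow> real" where
  "objective lam \<beta> n y = - (\<Sum>i=1..n. (y i / lam) powr (1 / \<beta>))"

end

theory Submission
  imports Defs
begin

text \<open>Write a feasible \<open>y\<close> as the tail sums \<open>y\<^sub>i = d\<^sub>i + \<dots> + d\<^sub>n\<close> of its nonnegative
  decrements. With \<open>H\<^sub>L = h\<^sub>1 + \<dots> + h\<^sub>L\<close> the constraint becomes \<open>v = \<Sum>\<^sub>L d\<^sub>L H\<^sub>L\<close>, so \<open>y\<close> is the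
  convex combination, with weights \<open>d\<^sub>L H\<^sub>L / v\<close>, of the step vectors \<open>e\<^sub>L\<close> that equal \<open>v / H\<^sub>L\<close>
  on \<open>{1..L}\<close> and \<open>0\<close> elsewhere. Since \<open>t powr (1 / \<beta>)\<close> is convex on \<open>t \<ge> 0\<close>, Jensen's
  inequality bounds \<open>\<Sum>\<^sub>i y\<^sub>i powr (1 / \<beta>)\<close> by the largest of its values
  \<open>L * (v / H\<^sub>L) powr (1 / \<beta>)\<close> at the \<open>e\<^sub>L\<close>, and the step vector of a maximising \<open>L\<close> attains
  this bound.\<close>

lemma convex_on_powr_nonneg:
  fixes p :: real
  assumes "1 \<le> p"
  shows "convex_on {0..} (\<lambda>x. x powr p)"
proof (rule convex_onI)
  fix t x y :: real
  assume t: "0 < t" "t < 1" and xy: "x \<in> {0..}" "y \<in> {0..}"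
  have scale: "(s * z) powr p \<le> s * z powr p" if "0 < s" "s \<le> 1" "0 \<le> z" for s z :: real
  proof -
    have "(s * z) powr p = s powr p * z powr p"
      using that by (simp add: powr_mult)
    also have "\<dots> \<le> s * z powr p"
      using that assms powr_le_one_le[of s p] by (intro mult_right_mono) auto
    finally show ?thesis .
  qed
  consider "x = 0" | "y = 0" | "0 < x" "0 < y"
    using xy by fastforce
  then show "((1 - t) *\<^sub>R x + t *\<^sub>R y) powr p \<le> (1 - t) * x powr p + t * y powr p"
  proof cases
    case 1
    then show ?thesis using scale[of t y] t xy by simp
  next
    case 2
    then show ?thesis using scale[of "1 - t" x] t xy by simp
  next
    case 3
    then show ?thesis using convex_onD[OF powr_convex[OF assms], of t x y] t by simp
  qed
qed auto

lemma sum_If_le_eq_sum_atMost: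
  fixes f :: "nat \<Rightarrow> 'a::comm_monoid_add"
  assumes "L \<le> n"
  shows "(\<Sum>i=1..n. if i \<le> L then f i else 0) = (\<Sum>i=1..L. f i)"
proof -
  have "{1..n} \<inter> {i. i \<le> L} = {1..L}"
    using assms by auto
  then show ?thesis
    by (simp add: sum.If_cases)
qed

lemma sum_If_ge_eq_sum_atLeast:
  fixes f :: "nat \<Rightarrow> 'a::comm_monoid_add"
  assumes "1 \<le> i"
  shows "(\<Sum>L=1..n. if i \<le> L then f L else 0) = (\<Sum>L=i..n. f L)"
proof -
  have "{1..n} \<inter> {L. i \<le> L} = {i..n}"
    using assms by auto
  then show ?thesis
    by (simp add: sum.If_cases)
qed

lemma sum_mult_tail_sums:
  fixes h d :: "nat \<Rightarrow> 'a::comm_semiring_0"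
  shows "(\<Sum>i=1..n. h i * (\<Sum>L=i..n. d L)) = (\<Sum>L=1..n. d L * (\<Sum>i=1..L. h i))"
proof -
  have "(\<Sum>i=1..n. h i * (\<Sum>L=i..n. d L)) = (\<Sum>i=1..n. \<Sum>L\<in>{L \<in> {1..n}. i \<le> L}. h i * d L)"
    by (intro sum.cong) (auto simp: sum_distrib_left intro!: sum.cong)
  also have "\<dots> = (\<Sum>L=1..n. \<Sum>i\<in>{i \<in> {1..n}. i \<le> L}. h i * d L)"
    by (rule sum.swap_restrict) auto
  also have "\<dots> = (\<Sum>L=1..n. d L * (\<Sum>i=1..L. h i))"
    by (intro sum.cong) (auto simp: sum_distrib_left mult.commute intro!: sum.cong)
  finally show ?thesis .
qed

lemma decreasing_eq_tail_sums:
  fixes y :: "nat \<Rightarrow> real"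
  assumes dec: "\<forall>i\<in>{1..<n}. y (Suc i) \<le> y i" and y_n: "0 \<le> y n"
  obtains d where "\<forall>L\<in>{1..n}. 0 \<le> d L" "\<forall>i\<in>{1..n}. y i = (\<Sum>L=i..n. d L)"
proof
  define z where "z L = (if L \<le> n then y L else 0)" for L
  define d where "d L = y L - z (Suc L)" for L
  show "\<forall>L\<in>{1..n}. 0 \<le> d L"
  proof
    fix L assume "L \<in> {1..n}"
    then show "0 \<le> d L"
      using dec y_n by (cases "L = n") (auto simp: d_def z_def)
  qed
  show "\<forall>i\<in>{1..n}. y i = (\<Sum>L=i..n. d L)"
  proof
    fix i assume i: "i \<in> {1..n}"
    have "(\<Sum>L=i..n. d L) = (\<Sum>L=i..<Suc n. z L - z (Suc L))"
      by (intro sum.cong) (auto simp: d_def z_def)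
    also have "\<dots> = y i"
      using sum_Suc_diff'[of i "Suc n" "\<lambda>L. - z L"] i by (simp add: z_def)
    finally show "y i = (\<Sum>L=i..n. d L)" ..
  qed
qed

lemma feasible_eq_tail_sums:
  fixes h y :: "nat \<Rightarrow> real"
  assumes "feasible h n v y"
  obtains d where "\<forall>L\<in>{1..n}. 0 \<le> d L" "\<forall>i\<in>{1..n}. y i = (\<Sum>L=i..n. d L)"
    "v = (\<Sum>L=1..n. d L * (\<Sum>i=1..L. h i))"
proof -
  have "\<forall>i\<in>{1..<n}. y (Suc i) \<le> y i" "0 \<le> y n"
    using assms by (simp_all add: feasible_def)
  then obtain d where d: "\<forall>L\<in>{1..n}. 0 \<le> d L" and y_tails: "\<forall>i\<in>{1..n}. y i = (\<Sum>L=i..n. d L)"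
    by (rule decreasing_eq_tail_sums)
  have "v = (\<Sum>i=1..n. h i * y i)"
    using assms by (simp add: feasible_def)
  also have "\<dots> = (\<Sum>i=1..n. h i * (\<Sum>L=i..n. d L))"
    using y_tails by simp
  also have "\<dots> = (\<Sum>L=1..n. d L * (\<Sum>i=1..L. h i))"
    by (rule sum_mult_tail_sums)
  finally show thesis
    using that d y_tails by blast
qed

lemma tail_sum_powr_le:
  fixes d H :: "nat \<Rightarrow> real" and p v :: real
  assumes p: "1 \<le> p"
    and d: "\<And>L. L \<in> {1..n} \<Longrightarrow> 0 \<le> d L" and H: "\<And>L. L \<in> {1..n} \<Longrightarrow> 0 < H L"
    and v: "v = (\<Sum>L=1..n. d L * H L)" "0 < v" and i: "1 \<le> i"
  shows "(\<Sum>L=i..n. d L) powr p \<le> (\<Sum>L=i..n. d L * H L / v * (v / H L) powr p)"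
proof -
  define w where "w L = d L * H L / v" for L
  define e where "e L = (if i \<le> L then v / H L else 0)" for L
  have w: "\<forall>L\<in>{1..n}. 0 \<le> w L" "sum w {1..n} = 1"
    using d H v by (auto simp: w_def sum_divide_distrib[symmetric] less_imp_le)
  then have nonempty: "{1..n} \<noteq> {}"
    by (intro notI) simp
  have "(\<Sum>L=i..n. d L) = (\<Sum>L=1..n. if i \<le> L then d L else 0)"
    using i by (rule sum_If_ge_eq_sum_atLeast[symmetric])
  also have "\<dots> = (\<Sum>L=1..n. w L *\<^sub>R e L)"
  proof (rule sum.cong)
    fix L assume "L \<in> {1..n}"
    then show "(if i \<le> L then d L else 0) = w L *\<^sub>R e L"
      using H[of L] v by (simp add: w_def e_def)
  qed simp
  also have "\<dots> powr p \<le> (\<Sum>L=1..n. w L * e L powr p)"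
    using w nonempty H v by (intro convex_on_sum[OF _ _ convex_on_powr_nonneg[OF p]])
      (auto simp: e_def less_imp_le)
  also have "\<dots> = (\<Sum>L=1..n. if i \<le> L then w L * (v / H L) powr p else 0)"
    by (intro sum.cong) (simp_all add: e_def)
  also have "\<dots> = (\<Sum>L=i..n. d L * H L / v * (v / H L) powr p)"
    using i by (subst sum_If_ge_eq_sum_atLeast) (simp_all add: w_def)
  finally show ?thesis .
qed

lemma sum_powr_tail_sums_le:
  fixes d H :: "nat \<Rightarrow> real" and p :: real
  assumes p: "1 \<le> p"
    and d: "\<And>L. L \<in> {1..n} \<Longrightarrow> 0 \<le> d L" and H: "\<And>L. L \<in> {1..n} \<Longrightarrow> 0 < H L"
  shows "(\<Sum>i=1..n. (\<Sum>L=i..n. d L) powr p)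
    \<le> (\<Sum>L=1..n. d L * H L) powr p * Max ((\<lambda>L. real L * H L powr (-p)) ` {1..n})"
    (is "?lhs \<le> ?v powr p * ?M")
proof -
  have dH: "0 \<le> d L * H L" if "L \<in> {1..n}" for L
    using d[OF that] H[OF that] by simp
  then have "0 \<le> ?v"
    by (intro sum_nonneg)
  then consider "?v = 0" | "0 < ?v"
    by fastforce
  then show ?thesis
  proof cases
    case 1
    then have "d L * H L = 0" if "L \<in> {1..n}" for L
      using dH that sum_nonneg_eq_0_iff[of "{1..n}" "\<lambda>L. d L * H L"] by simp
    then have "d L = 0" if "L \<in> {1..n}" for L
      using H[OF that] that by fastforce
    then show ?thesis
      using 1 by simp
  next
    case 2
    define g where "g L = d L * H L / ?v * (?v / H L) powr p" for L
    have "?lhs \<le> (\<Sum>i=1..n. \<Sum>L=i..n. g L)"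
      unfolding g_def using p d H 2 by (intro sum_mono tail_sum_powr_le) auto
    also have "\<dots> = (\<Sum>L=1..n. g L * real L)"
      using sum_mult_tail_sums[where h = "\<lambda>_. 1" and d = g and n = n] by simp
    also have "\<dots> \<le> (\<Sum>L=1..n. d L * H L / ?v * (?v powr p * ?M))"
    proof (rule sum_mono)
      fix L assume L: "L \<in> {1..n}"
      have "g L * real L = d L * H L / ?v * (?v powr p * (real L * H L powr (-p)))"
        using H[OF L] 2 by (simp add: g_def powr_divide powr_minus_divide)
      also have "\<dots> \<le> d L * H L / ?v * (?v powr p * ?M)"
        using L dH[OF L] 2 by (intro mult_left_mono Max_ge) auto
      finally show "g L * real L \<le> d L * H L / ?v * (?v powr p * ?M)" .
    qed
    also have "\<dots> = ?v powr p * ?M"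
      unfolding sum_distrib_right[symmetric] sum_divide_distrib[symmetric] using 2 by simp
    finally show ?thesis .
  qed
qed

lemma hminus_pos:
  assumes "strict_mono_on {0..1} W" "1 \<le> i" "i \<le> N"
  shows "0 < hminus W N i"
proof -
  have "real (i - 1) / real N < real i / real N"
    using assms(2,3) by (intro divide_strict_right_mono) auto
  moreover have "real (i - 1) / real N \<in> {0..1}" "real i / real N \<in> {0..1}"
    using assms(2,3) by auto
  ultimately show ?thesis
    using assms(1) by (auto simp: hminus_def strict_mono_on_def)
qed

lemma objective_ge_of_feasible:
  fixes h y :: "nat \<Rightarrow> real"
  assumes \<beta>: "0 < \<beta>" "\<beta> \<le> 1" and lam: "0 < lam"
    and h: "\<And>i. i \<in> {1..n} \<Longrightarrow> 0 < h i" and y: "feasible h n v y"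
  shows "- ((v / lam) powr (1 / \<beta>)) * Max ((\<lambda>L. real L * (\<Sum>i=1..L. h i) powr (- 1 / \<beta>)) ` {1..n})
    \<le> objective lam \<beta> n y"
proof -
  define p where "p = 1 / \<beta>"
  have p: "1 \<le> p"
    using \<beta> by (simp add: p_def)
  obtain d where d: "\<forall>L\<in>{1..n}. 0 \<le> d L" and y_tails: "\<forall>i\<in>{1..n}. y i = (\<Sum>L=i..n. d L)"
    and v: "v = (\<Sum>L=1..n. d L * (\<Sum>i=1..L. h i))"
    using y by (rule feasible_eq_tail_sums)
  have "(\<Sum>i=1..n. (y i / lam) powr p) = (\<Sum>i=1..n. (\<Sum>L=i..n. d L) powr p / lam powr p)"
  proof (rule sum.cong)
    fix i assume i: "i \<in> {1..n}"
    then have "0 \<le> (\<Sum>L=i..n. d L)"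
      using d by (intro sum_nonneg) auto
    then show "(y i / lam) powr p = (\<Sum>L=i..n. d L) powr p / lam powr p"
      using y_tails i lam by (simp add: powr_divide)
  qed simp
  also have "\<dots> = (\<Sum>i=1..n. (\<Sum>L=i..n. d L) powr p) / lam powr p"
    by (rule sum_divide_distrib[symmetric])
  also have "\<dots> \<le> v powr p * Max ((\<lambda>L. real L * (\<Sum>i=1..L. h i) powr (- p)) ` {1..n}) / lam powr p"
    unfolding v using p d h
    by (intro divide_right_mono sum_powr_tail_sums_le sum_pos) auto
  finally show ?thesis
    using lam by (simp add: objective_def p_def powr_divide)
qed

lemma objective_attained_by_step:
  fixes h :: "nat \<Rightarrow> real"
  assumes lam: "0 < lam" and v: "0 \<le> v" and n: "1 \<le> n"
    and h: "\<And>i. i \<in> {1..n} \<Longrightarrow> 0 < h i"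
  shows "\<exists>y. feasible h n v y \<and>
    objective lam \<beta> n y =
      - ((v / lam) powr (1 / \<beta>)) * Max ((\<lambda>L. real L * (\<Sum>i=1..L. h i) powr (- 1 / \<beta>)) ` {1..n})"
proof -
  define F where "F L = real L * (\<Sum>i=1..L. h i) powr (- 1 / \<beta>)" for L
  obtain L where L: "L \<in> {1..n}" "F L = Max (F ` {1..n})"
    using Max_in[of "F ` {1..n}"] n by fastforce
  define H where "H = (\<Sum>i=1..L. h i)"
  have H: "0 < H"
    unfolding H_def using L h by (intro sum_pos) auto
  define y where "y i = (if i \<le> L then v / H else 0)" for i
  have "feasible h n v y"
  proof -
    have "(\<Sum>i=1..n. h i * y i) = (\<Sum>i=1..n. if i \<le> L then h i * (v / H) else 0)"
      by (intro sum.cong) (simp_all add: y_def)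
    also have "\<dots> = (\<Sum>i=1..L. h i * (v / H))"
      by (rule sum_If_le_eq_sum_atMost) (use L in simp)
    also have "\<dots> = v"
      unfolding sum_distrib_right[symmetric] H_def[symmetric] using H by simp
    finally show ?thesis
      using H v by (auto simp: feasible_def y_def)
  qed
  moreover have "objective lam \<beta> n y = - ((v / lam) powr (1 / \<beta>)) * F L"
  proof -
    have "(\<Sum>i=1..n. (y i / lam) powr (1 / \<beta>))
        = (\<Sum>i=1..n. if i \<le> L then (v / H / lam) powr (1 / \<beta>) else 0)"
      by (intro sum.cong) (simp_all add: y_def)
    also have "\<dots> = real L * (v / H / lam) powr (1 / \<beta>)"
      by (subst sum_If_le_eq_sum_atMost) (use L in simp_all)
    also have "\<dots> = (v / lam) powr (1 / \<beta>) * F L"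
      using H lam v by (simp add: F_def H_def powr_divide powr_minus_divide powr_mult mult_ac)
    finally show ?thesis
      by (simp add: objective_def)
  qed
  ultimately show ?thesis
    using L(2) unfolding F_def by auto
qed

theorem corollary2:
  fixes N nm :: nat and \<beta> lam v :: real and W :: "real \<Rightarrow> real"
  assumes "0 < \<beta>" "\<beta> < 1" "0 < lam"
    and "1 \<le> nm" "nm \<le> N"
    and "inverse_S_shaped W" "W 0 = 0" "W 1 = 1"
    and "\<forall>x\<in>{0..1}. W x \<in> {0..1}"
    and "0 \<le> v"
  shows "(\<exists>y. feasible (hminus W N) nm v y \<and>
             objective lam \<beta> nm y =
               - ((v / lam) powr (1 / \<beta>)) *
                 Max ((\<lambda>L. real L * (\<Sum>i=1..L. hminus W N i) powr (- 1 / \<beta>)) ` {1..nm})) \<and>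
         (\<forall>y. feasible (hminus W N) nm v y \<longrightarrow>
             - ((v / lam) powr (1 / \<beta>)) *
                 Max ((\<lambda>L. real L * (\<Sum>i=1..L. hminus W N i) powr (- 1 / \<beta>)) ` {1..nm})
             \<le> objective lam \<beta> nm y)"
proof -
  \<comment> \<open>Of the hypotheses on \<open>W\<close> only strict monotonicity matters: it makes every \<open>h\<^sub>i\<close> positive.\<close>
  have "strict_mono_on {0..1} W"
    using assms(6) by (simp add: inverse_S_shaped_def)
  then have h: "0 < hminus W N i" if "i \<in> {1..nm}" for i
    using that assms(5) by (intro hminus_pos) auto
  show ?thesis
    using objective_attained_by_step[OF assms(3,10,4) h]
      objective_ge_of_feasible[OF assms(1) _ assms(3) h] assms(2)
    by auto
qed

end
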